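(* Let $p$ be a rational prime with $p\equiv1\pmod 8$. Then there exist positive integers $a,b$ with $p=(a+b\sqrt2)(a-b\sqrt2)$, and for such $a,b$ there exists $\alpha\in\mathbb{Z}[\zeta_8]$ such that $$a+b\sqrt2=\sigma_1(\alpha)\sigma_7(\alpha),\qquad a-b\sqrt2=\sigma_3(\alpha)\sigma_5(\alpha),$$ and $$\|\Sigma_{\mathbb{Q}(\zeta_8)}(\alpha)\|^2=2\sigma_1(\alpha)\sigma_7(\alpha)+2\sigma_3(\alpha)\sigma_5(\alpha)=4a.$$
   Context: $\zeta_8=e^{2\pi i/8}$, $\sqrt2=\zeta_8+\zeta_8^{7}$. For $i\in\{1,3,5,7\}$, $\sigma_i$ is the automorphism of $\mathbb{Q}(\zeta_8)$ with $\sigma_i(\zeta_8)=\zeta_8^i$. The canonical embedding norm is $\|\Sigma_{\mathbb{Q}(\zeta_8)}(x)\|^2=\sum_{i\in\{1,3,5,7\}}|\sigma_i(x)|^2$. *)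

theory Defs
  imports Complex_Main "HOL-Computational_Algebra.Primes"
begin

definition zeta8 :: complex where
  "zeta8 = exp (2 * of_real pi * \<i> / 8)"

text \<open>An element of Z[zeta8] is represented by its integer coordinates
  c 0, ..., c 3 in the integral basis 1, zeta8, zeta8^2, zeta8^3.\<close>
definition zelt :: "(nat \<Rightarrow> int) \<Rightarrow> complex" where
  "zelt c = (\<Sum>k<4. of_int (c k) * zeta8 ^ k)"

text \<open>sigma_i (alpha) for alpha = zelt c: the automorphism zeta8 -> zeta8^i.\<close>
definition sigma :: "nat \<Rightarrow> (nat \<Rightarrow> int) \<Rightarrow> complex" where
  "sigma i c = (\<Sum>k<4. of_int (c k) * zeta8 ^ (i * k))"

definition emb_norm2 :: "(nat \<Rightarrow> int) \<Rightarrow> real" where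
  "emb_norm2 c = (\<Sum>i\<in>{1,3,5,7::nat}. (cmod (sigma i c))\<^sup>2)"

end

theory Submission
  imports Defs "HOL-Number_Theory.Residue_Primitive_Roots"
begin

text \<open>
  The ring \<open>\<int>[\<zeta>\<^sub>8]\<close> is norm-Euclidean: dividing \<open>b \<cdot> adj a\<close> by \<open>N a\<close> with
  coordinatewise rounding leaves a remainder of norm less than \<open>N a\<close>. As \<open>p \<equiv> 1 (mod 8)\<close>,
  some \<open>r\<close> satisfies \<open>r\<^sup>4 \<equiv> -1 (mod p)\<close>, and a generator of the ideal \<open>(p, \<zeta> - r)\<close> has
  norm \<open>p\<close>; its relative norm \<open>\<sigma>\<^sub>1\<sigma>\<^sub>7\<close> is an element \<open>A + B\<surd>2\<close> of \<open>\<int>[\<surd>2]\<close> of norm \<open>p\<close>.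
  Any \<open>a + b\<surd>2\<close> with \<open>a > 0\<close> and norm \<open>p\<close> is, up to applying \<open>\<sigma>\<^sub>3\<close> (i.e. \<open>\<surd>2 \<mapsto> -\<surd>2\<close>)
  to \<open>A + B\<surd>2\<close>, a totally positive unit times \<open>A + B\<surd>2\<close>. Totally positive units of
  \<open>\<int>[\<surd>2]\<close> are squares \<open>\<epsilon>\<^sup>2\<close>, and \<open>\<epsilon>\<^sup>2\<close> is the relative norm of \<open>\<epsilon>\<close>, so \<open>a + b\<surd>2\<close> is a
  relative norm as well. The embedding norm then follows from \<open>\<sigma>\<^sub>7 = cnj \<sigma>\<^sub>1\<close> and
  \<open>\<sigma>\<^sub>5 = cnj \<sigma>\<^sub>3\<close>.
\<close>

section \<open>The ring \<open>\<int>[\<zeta>\<^sub>8]\<close>\<close>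

text \<open>Coordinates in the basis \<open>1, \<zeta>, \<zeta>\<^sup>2, \<zeta>\<^sup>3\<close>; the product reduces with \<open>\<zeta>\<^sup>4 = -1\<close>.\<close>

datatype z8 = Z8 (c0: int) (c1: int) (c2: int) (c3: int)

lemma z8_eq_iff: "x = y \<longleftrightarrow> c0 x = c0 y \<and> c1 x = c1 y \<and> c2 x = c2 y \<and> c3 x = c3 y"
  by (cases x; cases y) simp

instantiation z8 :: comm_ring_1
begin

definition "0 = Z8 0 0 0 0"
definition "1 = Z8 1 0 0 0"
definition "x + y = Z8 (c0 x + c0 y) (c1 x + c1 y) (c2 x + c2 y) (c3 x + c3 y)"
definition "- x = Z8 (- c0 x) (- c1 x) (- c2 x) (- c3 x)"
definition "x - y = Z8 (c0 x - c0 y) (c1 x - c1 y) (c2 x - c2 y) (c3 x - c3 y)"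
definition "x * y =
  Z8 (c0 x * c0 y - c1 x * c3 y - c2 x * c2 y - c3 x * c1 y)
     (c0 x * c1 y + c1 x * c0 y - c2 x * c3 y - c3 x * c2 y)
     (c0 x * c2 y + c1 x * c1 y + c2 x * c0 y - c3 x * c3 y)
     (c0 x * c3 y + c1 x * c2 y + c2 x * c1 y + c3 x * c0 y)"

instance
  by standard (simp_all add: z8_eq_iff zero_z8_def one_z8_def plus_z8_def uminus_z8_def
      minus_z8_def times_z8_def algebra_simps)

end

lemma z8_sel_simps [simp]:
  "c0 0 = 0" "c1 0 = 0" "c2 0 = 0" "c3 0 = 0"
  "c0 1 = 1" "c1 1 = 0" "c2 1 = 0" "c3 1 = 0"
  "c0 (- x) = - c0 x" "c1 (- x) = - c1 x" "c2 (- x) = - c2 x" "c3 (- x) = - c3 x"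
  "c0 (x + y) = c0 x + c0 y" "c1 (x + y) = c1 x + c1 y" "c2 (x + y) = c2 x + c2 y" "c3 (x + y) = c3 x + c3 y"
  "c0 (x - y) = c0 x - c0 y" "c1 (x - y) = c1 x - c1 y" "c2 (x - y) = c2 x - c2 y" "c3 (x - y) = c3 x - c3 y"
  by (simp_all add: zero_z8_def one_z8_def plus_z8_def uminus_z8_def minus_z8_def)

lemma of_int_z8: "of_int n = Z8 n 0 0 0"
proof -
  have "of_nat m = Z8 (int m) 0 0 0" for m
    by (induction m) (simp_all add: zero_z8_def one_z8_def plus_z8_def)
  then show ?thesis
    by (cases n rule: int_cases) (simp_all add: z8_eq_iff)
qed

text \<open>\<open>\<sigma>\<^sub>1(x) \<sigma>\<^sub>7(x) = relnorm_a x + relnorm_b x \<cdot> \<surd>2\<close> is the norm to \<open>\<int>[\<surd>2]\<close>.\<close>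

definition relnorm_a :: "z8 \<Rightarrow> int" where
  "relnorm_a x = c0 x ^ 2 + c1 x ^ 2 + c2 x ^ 2 + c3 x ^ 2"

definition relnorm_b :: "z8 \<Rightarrow> int" where
  "relnorm_b x = c0 x * c1 x + c1 x * c2 x + c2 x * c3 x - c3 x * c0 x"

definition z8_norm :: "z8 \<Rightarrow> int" where
  "z8_norm x = relnorm_a x ^ 2 - 2 * relnorm_b x ^ 2"

definition conj3 :: "z8 \<Rightarrow> z8" where "conj3 x = Z8 (c0 x) (c3 x) (- c2 x) (c1 x)"
definition conj5 :: "z8 \<Rightarrow> z8" where "conj5 x = Z8 (c0 x) (- c1 x) (c2 x) (- c3 x)"
definition conj7 :: "z8 \<Rightarrow> z8" where "conj7 x = Z8 (c0 x) (- c3 x) (- c2 x) (- c1 x)"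

definition z8_adj :: "z8 \<Rightarrow> z8" where "z8_adj x = conj3 x * conj5 x * conj7 x"

lemma relnorm_a_mult: "relnorm_a (x * y) = relnorm_a x * relnorm_a y + 2 * relnorm_b x * relnorm_b y"
  by (simp add: relnorm_a_def relnorm_b_def times_z8_def) Groebner_Basis.algebra

lemma relnorm_b_mult: "relnorm_b (x * y) = relnorm_a x * relnorm_b y + relnorm_b x * relnorm_a y"
  by (simp add: relnorm_a_def relnorm_b_def times_z8_def) Groebner_Basis.algebra

lemma z8_norm_mult: "z8_norm (x * y) = z8_norm x * z8_norm y"
  unfolding z8_norm_def relnorm_a_mult relnorm_b_mult by Groebner_Basis.algebra

lemma z8_norm_of_int: "z8_norm (of_int n) = n ^ 4"
  by (simp add: z8_norm_def relnorm_a_def relnorm_b_def of_int_z8)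

lemma z8_mult_adj: "x * z8_adj x = of_int (z8_norm x)"
  by (simp add: z8_adj_def conj3_def conj5_def conj7_def z8_norm_def relnorm_a_def relnorm_b_def
      times_z8_def of_int_z8) Groebner_Basis.algebra

lemma relnorm_a_conj3: "relnorm_a (conj3 x) = relnorm_a x"
  by (simp add: relnorm_a_def conj3_def)

lemma relnorm_b_conj3: "relnorm_b (conj3 x) = - relnorm_b x"
  by (simp add: relnorm_b_def conj3_def algebra_simps)

lemma z8_norm_conj3: "z8_norm (conj3 x) = z8_norm x"
  by (simp add: z8_norm_def relnorm_a_conj3 relnorm_b_conj3)

lemma square_eq_twice_square_imp_zero: "(q::int)\<^sup>2 = 2 * b\<^sup>2 \<Longrightarrow> b = 0"
proof (induction "nat \<bar>b\<bar>" arbitrary: q b rule: less_induct)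
  case less
  show ?case
  proof (rule ccontr)
    assume "b \<noteq> 0"
    from less.prems have "even q" by (metis dvd_triv_left even_power)
    then obtain q' where q: "q = 2 * q'" ..
    with less.prems have b2: "b\<^sup>2 = 2 * q'\<^sup>2" by (simp add: power2_eq_square)
    then have "even b" by (metis dvd_triv_left even_power)
    then obtain b' where b: "b = 2 * b'" ..
    with b2 have "q'\<^sup>2 = 2 * b'\<^sup>2" by (simp add: power2_eq_square)
    moreover have "nat \<bar>b'\<bar> < nat \<bar>b\<bar>" using b \<open>b \<noteq> 0\<close> by simp
    ultimately have "b' = 0" using less.hyps by blast
    with b \<open>b \<noteq> 0\<close> show False by simp
  qed
qed

lemma z8_norm_nonneg: "0 \<le> z8_norm x"
proof -
  define u v w where "u = c0 x ^ 2 + c2 x ^ 2" and "v = c1 x ^ 2 + c3 x ^ 2"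
    and "w = c0 x * (c1 x + c3 x) - c2 x * (c1 x - c3 x)"
  have "2 * relnorm_b x ^ 2 + 2 * w\<^sup>2 = 4 * u * v"
    unfolding relnorm_b_def u_def v_def w_def by Groebner_Basis.algebra
  moreover have "relnorm_a x ^ 2 = 4 * u * v + (u - v)\<^sup>2"
    unfolding relnorm_a_def u_def v_def by Groebner_Basis.algebra
  ultimately show ?thesis
    unfolding z8_norm_def using zero_le_power2[of w] zero_le_power2[of "u - v"] by linarith
qed

lemma z8_norm_pos:
  assumes "x \<noteq> 0"
  shows "0 < z8_norm x"
proof (rule ccontr)
  assume "\<not> 0 < z8_norm x"
  with z8_norm_nonneg[of x] have "relnorm_a x ^ 2 = 2 * relnorm_b x ^ 2"
    unfolding z8_norm_def by linarith
  then have "relnorm_a x = 0"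
    using square_eq_twice_square_imp_zero by fastforce
  then have "x = 0"
    unfolding relnorm_a_def z8_eq_iff by (simp add: add_nonneg_eq_0_iff)
  with assms show False ..
qed

section \<open>Euclidean division\<close>

lemma z8_sel_mult_of_int [simp]:
  "c0 (x * of_int n) = c0 x * n" "c1 (x * of_int n) = c1 x * n"
  "c2 (x * of_int n) = c2 x * n" "c3 (x * of_int n) = c3 x * n"
  by (simp_all add: times_z8_def of_int_z8)

lemma z8_norm_less_if_coords_small:
  assumes n: "0 < n"
    and t: "\<bar>2 * c0 t\<bar> \<le> n" "\<bar>2 * c1 t\<bar> \<le> n" "\<bar>2 * c2 t\<bar> \<le> n" "\<bar>2 * c3 t\<bar> \<le> n"
  shows "z8_norm t < n ^ 4"
proof -
  define u0 u1 u2 u3 where "u0 = 2 * c0 t" "u1 = 2 * c1 t" "u2 = 2 * c2 t" "u3 = 2 * c3 t"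
  have sq: "u\<^sup>2 \<le> n\<^sup>2" if "\<bar>u\<bar> \<le> n" for u
    using that n by (metis abs_le_square_iff abs_of_pos)
  have a: "4 * relnorm_a t = u0\<^sup>2 + u1\<^sup>2 + u2\<^sup>2 + u3\<^sup>2"
    and b: "4 * relnorm_b t = u0 * u1 + u1 * u2 + u2 * u3 - u3 * u0"
    unfolding relnorm_a_def relnorm_b_def u0_u1_u2_u3_def by Groebner_Basis.algebra+
  have u: "u0\<^sup>2 \<le> n\<^sup>2" "u1\<^sup>2 \<le> n\<^sup>2" "u2\<^sup>2 \<le> n\<^sup>2" "u3\<^sup>2 \<le> n\<^sup>2"
    unfolding u0_u1_u2_u3_def by (intro sq t)+
  then have "relnorm_a t \<le> n\<^sup>2"
    using a by linarith
  then consider "relnorm_a t < n\<^sup>2" | "relnorm_a t = n\<^sup>2"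
    by fastforce
  then show ?thesis
  proof cases
    case 1
    have "relnorm_a t ^ 2 < (n\<^sup>2)\<^sup>2"
      using 1 by (intro power_strict_mono) (auto simp: relnorm_a_def)
    moreover have "(n\<^sup>2)\<^sup>2 = n ^ 4"
      by (simp flip: power_mult)
    ultimately show ?thesis
      unfolding z8_norm_def using zero_le_power2[of "relnorm_b t"] by linarith
  next
    case 2
    have "u0\<^sup>2 = n\<^sup>2 \<and> u1\<^sup>2 = n\<^sup>2 \<and> u2\<^sup>2 = n\<^sup>2 \<and> u3\<^sup>2 = n\<^sup>2"
      using 2 a u by linarith
    then have "(u0 = n \<or> u0 = - n) \<and> (u1 = n \<or> u1 = - n) \<and> (u2 = n \<or> u2 = - n) \<and> (u3 = n \<or> u3 = - n)"
      by (simp add: power2_eq_iff)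
    then have "relnorm_b t \<noteq> 0"
      using b n by (auto simp: algebra_simps)
    with 2 show ?thesis
      unfolding z8_norm_def by (simp flip: power_mult)
  qed
qed

lemma abs_twice_rounding_error_le:
  assumes "(0::int) < n"
  shows "\<bar>2 * (v - (2 * v + n) div (2 * n) * n)\<bar> \<le> n"
proof -
  have "2 * v + n = 2 * n * ((2 * v + n) div (2 * n)) + (2 * v + n) mod (2 * n)"
    by simp
  moreover have "0 \<le> (2 * v + n) mod (2 * n)" "(2 * v + n) mod (2 * n) < 2 * n"
    using assms by simp_all
  ultimately show ?thesis
    by (simp add: algebra_simps abs_le_iff)
qed

lemma z8_euclidean_division:
  assumes "a \<noteq> 0"
  shows "\<exists>k. z8_norm (b - k * a) < z8_norm a"
proof -
  define n where "n = z8_norm a"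
  have n: "0 < n"
    using z8_norm_pos[OF assms] by (simp add: n_def)
  define y where "y = b * z8_adj a"
  define nearest where "nearest v = (2 * v + n) div (2 * n)" for v
  define k where "k = Z8 (nearest (c0 y)) (nearest (c1 y)) (nearest (c2 y)) (nearest (c3 y))"
  have "(b - k * a) * z8_adj a = y - k * of_int n"
    by (simp add: y_def n_def algebra_simps flip: z8_mult_adj)
  then have "z8_norm (b - k * a) * z8_norm (z8_adj a) = z8_norm (y - k * of_int n)"
    by (simp flip: z8_norm_mult)
  also have "\<dots> < n ^ 4"
  proof (rule z8_norm_less_if_coords_small[OF n])
    have "\<bar>2 * (v - nearest v * n)\<bar> \<le> n" for v
      unfolding nearest_def by (rule abs_twice_rounding_error_le[OF n])
    then show "\<bar>2 * c0 (y - k * of_int n)\<bar> \<le> n" "\<bar>2 * c1 (y - k * of_int n)\<bar> \<le> n"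
      "\<bar>2 * c2 (y - k * of_int n)\<bar> \<le> n" "\<bar>2 * c3 (y - k * of_int n)\<bar> \<le> n"
      by (simp_all only: z8_sel_simps z8_sel_mult_of_int k_def z8.sel)
  qed
  also have "\<dots> = n * z8_norm (z8_adj a)"
    using z8_norm_mult[of a "z8_adj a"] by (simp add: z8_mult_adj z8_norm_of_int n_def)
  finally have "z8_norm (b - k * a) < n"
    using z8_norm_nonneg[of "z8_adj a"] by (simp add: mult_less_cancel_right)
  then show ?thesis
    unfolding n_def by blast
qed

section \<open>An element of norm \<open>p\<close>\<close>

lemma prime_1_mod_8_fourth_root_minus_one:
  fixes p :: nat
  assumes p: "prime p" and p8: "p mod 8 = 1"
  obtains r :: int where "int p dvd r ^ 4 + 1"
proof -
  obtain g where "residue_primroot p g"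
    using prime_primitive_root_exists[OF prime_gt_1_nat[OF p] p] by blast
  then have ord: "ord p g = p - 1"
    using p by (simp add: residue_primroot_def totient_prime)
  define m where "m = (p - 1) div 8"
  have pm: "p - 1 = 8 * m" and "0 < m"
    using p8 prime_gt_1_nat[OF p] unfolding m_def by presburger+
  have "int g ^ (8 * m) = (int g ^ (4 * m))\<^sup>2"
    by (simp flip: power_mult)
  then have factor: "int g ^ (8 * m) - 1 = (int g ^ (4 * m) - 1) * (int g ^ (4 * m) + 1)"
    by (simp add: power2_eq_square algebra_simps)
  have "[g ^ (8 * m) = 1] (mod p)"
    using ord_works[of g p] ord pm by simp
  then have "int p dvd (int g ^ (4 * m) - 1) * (int g ^ (4 * m) + 1)"
    using cong_int_iff[of "g ^ (8 * m)" 1 p] by (simp add: cong_iff_dvd_diff flip: factor)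
  moreover have "\<not> [g ^ (4 * m) = 1] (mod p)"
    using ord_minimal[of "4 * m" p g] ord pm \<open>0 < m\<close> by simp
  then have "\<not> int p dvd int g ^ (4 * m) - 1"
    using cong_int_iff[of "g ^ (4 * m)" 1 p] by (simp add: cong_iff_dvd_diff)
  ultimately have "int p dvd (int g ^ m) ^ 4 + 1"
    using p by (simp add: prime_dvd_mult_iff power_mult mult.commute)
  then show ?thesis ..
qed

lemma fourth_root_minus_one_mod_not_square:
  fixes q r :: int
  assumes q: "prime q" "\<not> q dvd 2" and r: "q dvd r ^ 4 + 1"
  obtains s where "q dvd s ^ 4 + 1" "\<not> q\<^sup>2 dvd s ^ 4 + 1"
proof (cases "q\<^sup>2 dvd r ^ 4 + 1")
  case False
  with r that show ?thesis by blast
next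
  case True
  have expand: "(r + q) ^ 4 + 1 = (r ^ 4 + 1) + q * (4 * r ^ 3) + q\<^sup>2 * (6 * r\<^sup>2 + 4 * r * q + q\<^sup>2)"
    by Groebner_Basis.algebra
  have "\<not> q dvd r"
  proof
    assume "q dvd r"
    then have "q dvd r ^ 4" by (rule dvd_trans[OF _ dvd_power]) simp
    with r have "q dvd 1" by (simp add: dvd_add_right_iff)
    with q show False by (simp add: not_prime_unit)
  qed
  moreover have "\<not> q dvd 4"
    using q prime_dvd_mult_iff[of q 2 2] by simp
  ultimately have "\<not> q dvd 4 * r ^ 3"
    using q by (simp add: prime_dvd_mult_iff prime_dvd_power_iff)
  moreover have "q \<noteq> 0"
    using q by auto
  ultimately have "\<not> q\<^sup>2 dvd q * (4 * r ^ 3)"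
    by (simp add: power2_eq_square)
  with True have "\<not> q\<^sup>2 dvd (r + q) ^ 4 + 1"
    unfolding expand by (simp add: dvd_add_left_iff dvd_add_right_iff)
  moreover have "q dvd (r + q) ^ 4 + 1"
    using r unfolding expand by (simp add: power2_eq_square)
  ultimately show ?thesis
    using that by blast
qed

definition zeta :: z8 where "zeta = Z8 0 1 0 0"

lemma z8_norm_zeta_minus_of_int: "z8_norm (zeta - of_int r) = r ^ 4 + 1"
  by (simp add: zeta_def of_int_z8 z8_norm_def relnorm_a_def relnorm_b_def) Groebner_Basis.algebra

text \<open>Reduction modulo the prime \<open>(p, \<zeta> - r)\<close> above \<open>p\<close> when \<open>p\<close> divides \<open>r\<^sup>4 + 1\<close>.\<close>

definition z8_eval :: "int \<Rightarrow> z8 \<Rightarrow> int" where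
  "z8_eval r x = c0 x + c1 x * r + c2 x * r\<^sup>2 + c3 x * r ^ 3"

lemma z8_eval_diff: "z8_eval r (x - y) = z8_eval r x - z8_eval r y"
  by (simp add: z8_eval_def algebra_simps)

lemma z8_eval_of_int: "z8_eval r (of_int n) = n"
  by (simp add: z8_eval_def of_int_z8)

lemma z8_eval_zeta_minus_of_int: "z8_eval r (zeta - of_int r) = 0"
  by (simp add: z8_eval_def zeta_def of_int_z8)

lemma z8_eval_mult_mod: "r ^ 4 + 1 dvd z8_eval r (x * y) - z8_eval r x * z8_eval r y"
proof -
  have "z8_eval r (x * y) - z8_eval r x * z8_eval r y = (r ^ 4 + 1) *
    - (c1 x * c3 y + c2 x * c2 y + c3 x * c1 y + (c2 x * c3 y + c3 x * c2 y) * r + c3 x * c3 y * r\<^sup>2)"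
    by (simp add: z8_eval_def times_z8_def) Groebner_Basis.algebra
  then show ?thesis
    by (metis dvd_triv_left)
qed

lemma z8_dvd_if_norm_minimal:
  assumes diff: "\<And>x y. x \<in> I \<Longrightarrow> y \<in> I \<Longrightarrow> x - y \<in> I"
    and mult: "\<And>x y. x \<in> I \<Longrightarrow> y * x \<in> I"
    and a: "a \<in> I" "a \<noteq> 0"
    and min: "\<And>x. x \<in> I \<Longrightarrow> x \<noteq> 0 \<Longrightarrow> z8_norm a \<le> z8_norm x"
    and b: "b \<in> I"
  shows "a dvd b"
proof -
  obtain k where "z8_norm (b - k * a) < z8_norm a"
    using z8_euclidean_division[OF a(2)] ..
  moreover have "b - k * a \<in> I"
    using a b by (intro diff mult)
  ultimately have "b - k * a = 0"
    using min by force
  then show ?thesis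
    by simp
qed

lemma z8_norm_dvd: "a dvd b \<Longrightarrow> z8_norm a dvd z8_norm b"
  by (elim dvdE) (simp add: z8_norm_mult)

lemma eq_prime_if_dvd_prime_power:
  fixes p n :: int
  assumes p: "prime p" and "0 \<le> n" "n dvd p ^ k" "p dvd n" "\<not> p\<^sup>2 dvd n"
  shows "n = p"
proof -
  obtain m where "n = p ^ m"
    using divides_primepow[OF p \<open>n dvd p ^ k\<close>] \<open>0 \<le> n\<close> by auto
  moreover have "m \<noteq> 0"
  proof
    assume "m = 0"
    with \<open>p dvd n\<close> \<open>n = p ^ m\<close> have "is_unit p" by simp
    with p show False using not_prime_unit by blast
  qed
  moreover from \<open>n = p ^ m\<close> have "\<not> 2 \<le> m"
    using assms by (auto simp: le_imp_power_dvd)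
  ultimately show ?thesis
    by (simp add: numeral_2_eq_2 le_Suc_eq not_le less_Suc_eq)
qed

text \<open>A nonzero element of least norm in the kernel \<open>I\<close> of \<^const>\<open>z8_eval\<close> generates \<open>I\<close>,
  so its norm divides both \<open>N p = p\<^sup>4\<close> and \<open>N (\<zeta> - r) = r\<^sup>4 + 1\<close>.\<close>

lemma exists_z8_norm_eq_prime:
  fixes p :: nat
  assumes p: "prime p" and p8: "p mod 8 = 1"
  obtains x where "z8_norm x = int p"
proof -
  define P where "P = int p"
  have P: "prime P" "\<not> P dvd 2"
    using p p8 by (auto simp: P_def dest: zdvd_imp_le)
  obtain r where r: "P dvd r ^ 4 + 1" "\<not> P\<^sup>2 dvd r ^ 4 + 1"
    using prime_1_mod_8_fourth_root_minus_one[OF p p8] fourth_root_minus_one_mod_not_square[OF P]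
    unfolding P_def by metis
  define I where "I = {x. P dvd z8_eval r x}"
  have diff: "x - y \<in> I" if "x \<in> I" "y \<in> I" for x y
    using that by (simp add: I_def z8_eval_diff)
  have mult: "y * x \<in> I" if "x \<in> I" for x y
  proof -
    have "P dvd z8_eval r (y * x) - z8_eval r y * z8_eval r x"
      using r(1) z8_eval_mult_mod by (rule dvd_trans)
    moreover have "P dvd z8_eval r y * z8_eval r x"
      using that by (simp add: I_def)
    ultimately have "P dvd (z8_eval r (y * x) - z8_eval r y * z8_eval r x) + z8_eval r y * z8_eval r x"
      by (rule dvd_add)
    then show ?thesis
      by (simp add: I_def)
  qed
  have P_in_I: "of_int P \<in> I - {0}"
    using prime_gt_0_int[OF P(1)] by (simp add: I_def z8_eval_def of_int_z8 zero_z8_def)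
  then obtain a where a: "a \<in> I - {0}" and "\<forall>x. x \<in> I - {0} \<longrightarrow> nat (z8_norm a) \<le> nat (z8_norm x)"
    using ex_has_least_nat[of "\<lambda>x. x \<in> I - {0}" "of_int P" "\<lambda>x. nat (z8_norm x)"] by blast
  then have min: "z8_norm a \<le> z8_norm x" if "x \<in> I" "x \<noteq> 0" for x
    using that z8_norm_nonneg[of x] by force
  have "a dvd of_int P" "a dvd zeta - of_int r"
    using a P_in_I
    by (auto intro!: z8_dvd_if_norm_minimal[OF diff mult _ _ min] simp: I_def z8_eval_zeta_minus_of_int)
  then have "z8_norm a dvd P ^ 4" "z8_norm a dvd r ^ 4 + 1"
    by (auto dest!: z8_norm_dvd simp: z8_norm_of_int z8_norm_zeta_minus_of_int)
  moreover have "P dvd z8_norm a"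
    using mult[of a "z8_adj a"] a by (simp add: I_def z8_mult_adj z8_eval_of_int mult.commute)
  ultimately have "z8_norm a = P"
    using r(2) z8_norm_nonneg[of a] by (intro eq_prime_if_dvd_prime_power[OF P(1)]) (auto dest: dvd_trans)
  then show ?thesis
    using that P_def by blast
qed

section \<open>Elements of \<open>\<int>[\<surd>2]\<close> of prime norm\<close>

text \<open>Descent by division of \<open>c + d\<surd>2\<close> by \<open>3 + 2\<surd>2 = (1 + \<surd>2)\<^sup>2\<close>.\<close>

lemma pell_unit_square:
  fixes c d :: int
  assumes "0 < c" "c\<^sup>2 - 2 * d\<^sup>2 = 1"
  shows "\<exists>e f. c = e\<^sup>2 + 2 * f\<^sup>2 \<and> d = 2 * e * f"
  using assms
proof (induction "nat c" arbitrary: c d rule: less_induct)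
  case less
  show ?case
  proof (cases "d = 0")
    case True
    with less.prems have "c = 1"
      by (simp add: power2_eq_1_iff)
    with True show ?thesis
      by (intro exI[of _ 1] exI[of _ 0]) simp
  next
    case False
    define d0 where "d0 = \<bar>d\<bar>"
    have "1 \<le> d0" and c2: "c\<^sup>2 = 1 + 2 * d0\<^sup>2"
      using False less.prems by (simp_all add: d0_def)
    from \<open>1 \<le> d0\<close> have "1 \<le> d0\<^sup>2"
      by simp
    with c2 have "(4 * d0)\<^sup>2 < (3 * c)\<^sup>2" and "c\<^sup>2 < (2 * d0)\<^sup>2"
      by (simp_all add: power_mult_distrib)
    then have c': "0 < 3 * c - 4 * d0" "3 * c - 4 * d0 < c"
      using power_less_imp_less_base[of "4 * d0" 2 "3 * c"] power_less_imp_less_base[of c 2 "2 * d0"]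
        less.prems(1) \<open>1 \<le> d0\<close> by simp_all
    have "(3 * c - 4 * d0)\<^sup>2 - 2 * (3 * d0 - 2 * c)\<^sup>2 = 1"
      using c2 by Groebner_Basis.algebra
    moreover have "nat (3 * c - 4 * d0) < nat c"
      using c' by simp
    ultimately obtain e f where ef: "3 * c - 4 * d0 = e\<^sup>2 + 2 * f\<^sup>2" "3 * d0 - 2 * c = 2 * e * f"
      using less.hyps c'(1) by blast
    have "c = 3 * (3 * c - 4 * d0) + 4 * (3 * d0 - 2 * c)" "d0 = 2 * (3 * c - 4 * d0) + 3 * (3 * d0 - 2 * c)"
      by simp_all
    then have c: "c = (e + 2 * f)\<^sup>2 + 2 * (e + f)\<^sup>2" and d0: "d0 = 2 * (e + 2 * f) * (e + f)"
      unfolding ef by Groebner_Basis.algebra+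
    consider "d = d0" | "d = - d0"
      by (cases "0 \<le> d") (auto simp: d0_def)
    then show ?thesis
    proof cases
      case 1
      with c d0 show ?thesis by blast
    next
      case 2
      with c d0 have "c = (- (e + 2 * f))\<^sup>2 + 2 * (e + f)\<^sup>2" "d = 2 * (- (e + 2 * f)) * (e + f)"
        by (simp_all only: power2_minus mult_minus_left mult_minus_right)
      then show ?thesis by blast
    qed
  qed
qed

lemma same_prime_norm_unit_multiple:
  fixes a b A B P :: int
  assumes P: "prime P" "\<not> P dvd 2"
    and ab: "a\<^sup>2 - 2 * b\<^sup>2 = P" and AB: "A\<^sup>2 - 2 * B\<^sup>2 = P" and "0 < a" "0 < A"
    and "P dvd a * A - 2 * b * B"
  obtains c d where "0 < c" "c\<^sup>2 - 2 * d\<^sup>2 = 1" "a = c * A + 2 * d * B" "b = c * B + d * A"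
proof -
  have P0: "0 < P"
    using P by (simp add: prime_gt_0_int)
  obtain c where c: "a * A - 2 * b * B = P * c"
    using \<open>P dvd a * A - 2 * b * B\<close> ..
  have "(a * A - 2 * b * B)\<^sup>2 - 2 * (A * b - a * B)\<^sup>2 = (a\<^sup>2 - 2 * b\<^sup>2) * (A\<^sup>2 - 2 * B\<^sup>2)"
    by Groebner_Basis.algebra
  then have norm: "(a * A - 2 * b * B)\<^sup>2 - 2 * (A * b - a * B)\<^sup>2 = P\<^sup>2"
    unfolding ab AB by (simp add: power2_eq_square)
  then have "2 * (A * b - a * B)\<^sup>2 = (P * c)\<^sup>2 - P\<^sup>2"
    unfolding c by linarith
  also have "\<dots> = P * (P * c\<^sup>2 - P)"
    by (simp add: power2_eq_square algebra_simps)
  finally have "P dvd 2 * (A * b - a * B)\<^sup>2"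
    by simp
  then have "P dvd A * b - a * B"
    using P by (auto simp: prime_dvd_mult_iff dest: prime_dvd_power)
  then obtain d where d: "A * b - a * B = P * d" ..
  have "P\<^sup>2 * (c\<^sup>2 - 2 * d\<^sup>2) = P\<^sup>2 * 1"
    using norm unfolding c d by Groebner_Basis.algebra
  moreover have "P * a = P * (c * A + 2 * d * B)" "P * b = P * (c * B + d * A)"
    using c d AB by Groebner_Basis.algebra+
  moreover have "\<bar>2 * b * B\<bar> < a * A"
  proof (rule power_less_imp_less_base)
    have "(2 * b * B)\<^sup>2 = (2 * b\<^sup>2) * (2 * B\<^sup>2)"
      by Groebner_Basis.algebra
    also have "\<dots> < a\<^sup>2 * A\<^sup>2"
      using ab AB P0 by (intro mult_strict_mono) auto
    finally show "\<bar>2 * b * B\<bar>\<^sup>2 < (a * A)\<^sup>2"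
      by (simp add: power_mult_distrib)
  qed (use \<open>0 < a\<close> \<open>0 < A\<close> in simp)
  then have "0 < P * c"
    unfolding c[symmetric] by linarith
  ultimately show ?thesis
    using that P0 by (simp add: zero_less_mult_iff)
qed

lemma exists_relnorm_pos_norm_eq_prime:
  fixes p :: nat
  assumes p: "prime p" and p8: "p mod 8 = 1"
  obtains x where "0 < relnorm_a x" "0 < relnorm_b x" "z8_norm x = int p"
proof -
  obtain x where x: "z8_norm x = int p"
    using exists_z8_norm_eq_prime[OF p p8] .
  have "0 < int p"
    using p by (simp add: prime_gt_0_nat)
  have "relnorm_a x \<noteq> 0"
  proof
    assume "relnorm_a x = 0"
    with x have "int p = - 2 * relnorm_b x ^ 2"
      by (simp add: z8_norm_def)
    with \<open>0 < int p\<close> show False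
      using zero_le_power2[of "relnorm_b x"] by linarith
  qed
  then have a: "0 < relnorm_a x"
    by (simp add: relnorm_a_def order.strict_iff_order)
  have "relnorm_b x \<noteq> 0"
  proof
    assume "relnorm_b x = 0"
    with x have "prime (relnorm_a x ^ 2)"
      using p by (simp add: z8_norm_def)
    then show False
      by (simp add: prime_power_iff)
  qed
  then consider "0 < relnorm_b x" | "0 < relnorm_b (conj3 x)"
    by (fastforce simp: relnorm_b_conj3)
  then show ?thesis
  proof cases
    case 1
    with a x show ?thesis using that by blast
  next
    case 2
    with a x show ?thesis by (intro that[of "conj3 x"]) (simp_all add: relnorm_a_conj3 z8_norm_conj3)
  qed
qed

lemma exists_relnorm_eq:
  fixes p :: nat and a b :: int
  assumes p: "prime p" and p8: "p mod 8 = 1" and "0 < a" and ab: "a\<^sup>2 - 2 * b\<^sup>2 = int p"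
  obtains y where "relnorm_a y = a" "relnorm_b y = b"
proof -
  define P where "P = int p"
  have P: "prime P" "\<not> P dvd 2"
    using p p8 by (auto simp: P_def dest: zdvd_imp_le)
  obtain x0 where x0: "0 < relnorm_a x0" "z8_norm x0 = P"
    using exists_relnorm_pos_norm_eq_prime[OF p p8] unfolding P_def by metis
  define A B where "A = relnorm_a x0" and "B = relnorm_b x0"
  have "(a * A - 2 * b * B) * (a * A + 2 * b * B) = a\<^sup>2 * A\<^sup>2 - 4 * b\<^sup>2 * B\<^sup>2"
    by Groebner_Basis.algebra
  also have "\<dots> = P * (P + 2 * b\<^sup>2 + 2 * B\<^sup>2)"
    using ab x0(2) unfolding A_def B_def z8_norm_def P_def[symmetric]
    by (simp add: algebra_simps power2_eq_square)
  finally have "P dvd (a * A - 2 * b * B) * (a * A + 2 * b * B)"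
    by simp
  then have "P dvd a * A - 2 * b * B \<or> P dvd a * A + 2 * b * B"
    using P(1) by (simp add: prime_dvd_mult_iff)
  then obtain x where x: "0 < relnorm_a x" "relnorm_a x ^ 2 - 2 * relnorm_b x ^ 2 = P"
    "P dvd a * relnorm_a x - 2 * b * relnorm_b x"
  proof
    assume "P dvd a * A - 2 * b * B"
    with x0 show ?thesis
      using that[of x0] unfolding A_def B_def z8_norm_def by simp
  next
    assume "P dvd a * A + 2 * b * B"
    with x0 show ?thesis
      using that[of "conj3 x0"] unfolding A_def B_def z8_norm_def by (simp add: relnorm_a_conj3 relnorm_b_conj3)
  qed
  obtain c d where cd: "0 < c" "c\<^sup>2 - 2 * d\<^sup>2 = 1"
    "a = c * relnorm_a x + 2 * d * relnorm_b x" "b = c * relnorm_b x + d * relnorm_a x"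
    using same_prime_norm_unit_multiple[OF P ab[folded P_def] x(2) \<open>0 < a\<close> x(1,3)] .
  obtain e f where ef: "c = e\<^sup>2 + 2 * f\<^sup>2" "d = 2 * e * f"
    using pell_unit_square[OF cd(1,2)] by blast
  define v where "v = Z8 e f 0 (- f)" \<comment> \<open>\<open>e + f (\<zeta> - \<zeta>\<^sup>3) = e + f\<surd>2\<close>\<close>
  have "relnorm_a v = c" "relnorm_b v = d"
    unfolding v_def relnorm_a_def relnorm_b_def ef by (simp_all add: power2_eq_square)
  then have "relnorm_a (v * x) = a" "relnorm_b (v * x) = b"
    unfolding relnorm_a_mult relnorm_b_mult cd(3,4) by (simp_all add: algebra_simps)
  then show ?thesis ..
qed

section \<open>The complex embeddings\<close>

lemma zeta8_eq: "zeta8 = Complex (sqrt 2 / 2) (sqrt 2 / 2)"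
proof -
  have "zeta8 = cis (pi / 4)"
    unfolding zeta8_def cis_conv_exp by (simp add: field_simps)
  then show ?thesis
    by (simp add: cis.ctr cos_45 sin_45)
qed

lemma zeta8_pow_2: "zeta8 ^ 2 = \<i>"
  by (simp add: zeta8_eq power2_eq_square complex_eq_iff)

lemma zeta8_pow_4: "zeta8 ^ 4 = -1"
proof -
  have "zeta8 ^ 4 = (zeta8 ^ 2) ^ 2"
    by (simp flip: power_mult)
  then show ?thesis
    by (simp add: zeta8_pow_2)
qed

lemma cnj_zeta8: "cnj zeta8 = zeta8 ^ 7"
proof -
  have "zeta8 ^ 7 = zeta8 ^ 4 * zeta8 ^ 2 * zeta8"
    by (simp flip: power_add power_Suc2)
  also have "\<dots> = - \<i> * zeta8"
    by (simp only: zeta8_pow_4 zeta8_pow_2) simp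
  also have "\<dots> = cnj zeta8"
    by (simp add: zeta8_eq complex_eq_iff)
  finally show ?thesis ..
qed

lemma zeta8_pow_mod_8: "zeta8 ^ (n mod 8) = zeta8 ^ n"
proof -
  have "zeta8 ^ 8 = (zeta8 ^ 4) ^ 2"
    by (simp flip: power_mult)
  then have "zeta8 ^ 8 = 1"
    by (simp add: zeta8_pow_4)
  moreover have "zeta8 ^ n = (zeta8 ^ 8) ^ (n div 8) * zeta8 ^ (n mod 8)"
    by (simp flip: power_mult power_add)
  ultimately show ?thesis
    by simp
qed

lemma sigma_mod_8: "sigma (i mod 8) c = sigma i c"
  unfolding sigma_def by (metis mod_mult_left_eq zeta8_pow_mod_8)

lemma cnj_sigma: "cnj (sigma i c) = sigma (7 * i) c"
  by (simp add: sigma_def cnj_zeta8 power_mult mult.assoc flip: power_mult)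

lemma emb_norm2_eq:
  "complex_of_real (emb_norm2 c) = 2 * (sigma 1 c * sigma 7 c) + 2 * (sigma 3 c * sigma 5 c)"
proof -
  have conj: "sigma 7 c = cnj (sigma 1 c)" "sigma 5 c = cnj (sigma 3 c)"
    using cnj_sigma[of 1 c] cnj_sigma[of 3 c] sigma_mod_8[of 21 c] by simp_all
  have "emb_norm2 c = 2 * (cmod (sigma 1 c))\<^sup>2 + 2 * (cmod (sigma 3 c))\<^sup>2"
    unfolding emb_norm2_def by (simp add: conj)
  then show ?thesis
    unfolding conj by (simp flip: complex_norm_square)
qed

definition z8_coeffs :: "z8 \<Rightarrow> nat \<Rightarrow> int" where
  "z8_coeffs x = nth [c0 x, c1 x, c2 x, c3 x]"

lemma sigma_z8_coeffs:
  "sigma i (z8_coeffs x) = of_int (c0 x) + of_int (c1 x) * zeta8 ^ i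
     + of_int (c2 x) * zeta8 ^ (2 * i) + of_int (c3 x) * zeta8 ^ (3 * i)"
  by (simp add: sigma_def z8_coeffs_def eval_nat_numeral mult.commute)

lemma sigma3_z8_coeffs: "sigma 3 (z8_coeffs x) = sigma 1 (z8_coeffs (conj3 x))"
proof -
  have "zeta8 ^ 6 = zeta8 ^ 4 * zeta8 ^ 2"
    by (simp flip: power_add)
  then have "zeta8 ^ 6 = - (zeta8 ^ 2)"
    by (simp add: zeta8_pow_4)
  moreover have "zeta8 ^ 9 = zeta8"
    using zeta8_pow_mod_8[of 9] by simp
  ultimately show ?thesis
    by (simp add: sigma_z8_coeffs conj3_def algebra_simps power2_eq_square)
qed

lemma cmod_sigma1_z8_coeffs_sq:
  "(cmod (sigma 1 (z8_coeffs x)))\<^sup>2 = relnorm_a x + relnorm_b x * sqrt 2"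
proof -
  define s where "s = sqrt 2 / 2"
  have s: "2 * s = sqrt 2" "2 * s\<^sup>2 = 1"
    by (simp_all add: s_def power_divide)
  have "Re zeta8 = s" "Im zeta8 = s" "Re (zeta8 ^ 3) = - s" "Im (zeta8 ^ 3) = s"
    using zeta8_pow_2 by (simp_all add: zeta8_eq s_def power3_eq_cube power2_eq_square)
  moreover have "sigma 1 (z8_coeffs x)
      = of_int (c0 x) + of_int (c1 x) * zeta8 + of_int (c2 x) * \<i> + of_int (c3 x) * zeta8 ^ 3"
    by (simp add: sigma_z8_coeffs zeta8_pow_2)
  ultimately have "sigma 1 (z8_coeffs x)
      = Complex (c0 x + s * (c1 x - c3 x)) (c2 x + s * (c1 x + c3 x))"
    by (simp add: complex_eq_iff algebra_simps)
  then have "(cmod (sigma 1 (z8_coeffs x)))\<^sup>2 = (c0 x + s * (c1 x - c3 x))\<^sup>2 + (c2 x + s * (c1 x + c3 x))\<^sup>2"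
    by (simp only: cmod_power2 complex.sel)
  also have "\<dots> = c0 x ^ 2 + c2 x ^ 2 + 2 * s\<^sup>2 * (c1 x ^ 2 + c3 x ^ 2)
        + 2 * s * (c0 x * c1 x + c1 x * c2 x + c2 x * c3 x - c3 x * c0 x)"
    by (simp add: power2_eq_square algebra_simps)
  finally show ?thesis
    unfolding s by (simp add: relnorm_a_def relnorm_b_def algebra_simps)
qed

lemma sigma1_mult_sigma7_z8_coeffs:
  "sigma 1 (z8_coeffs x) * sigma 7 (z8_coeffs x) = of_real (relnorm_a x + relnorm_b x * sqrt 2)"
proof -
  have "sigma 7 (z8_coeffs x) = cnj (sigma 1 (z8_coeffs x))"
    using cnj_sigma[of 1 "z8_coeffs x"] by simp
  then have "sigma 1 (z8_coeffs x) * sigma 7 (z8_coeffs x) = of_real ((cmod (sigma 1 (z8_coeffs x)))\<^sup>2)"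
    by (simp only: complex_norm_square)
  then show ?thesis
    by (simp only: cmod_sigma1_z8_coeffs_sq)
qed

lemma sigma3_mult_sigma5_z8_coeffs:
  "sigma 3 (z8_coeffs x) * sigma 5 (z8_coeffs x) = of_real (relnorm_a x - relnorm_b x * sqrt 2)"
proof -
  have "sigma 5 (z8_coeffs x) = cnj (sigma 3 (z8_coeffs x))"
    using cnj_sigma[of 3 "z8_coeffs x"] sigma_mod_8[of 21 "z8_coeffs x"] by simp
  then have "sigma 3 (z8_coeffs x) * sigma 5 (z8_coeffs x)
      = of_real ((cmod (sigma 1 (z8_coeffs (conj3 x))))\<^sup>2)"
    by (simp only: complex_norm_square sigma3_z8_coeffs)
  then show ?thesis
    by (simp only: cmod_sigma1_z8_coeffs_sq relnorm_a_conj3 relnorm_b_conj3) simp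
qed

lemma mult_conj_sqrt2: "(x + y * sqrt 2) * (x - y * sqrt 2) = x\<^sup>2 - 2 * y\<^sup>2"
  by (simp add: algebra_simps power2_eq_square)

theorem lemma4:
  fixes p :: nat
  assumes "prime p" and "p mod 8 = 1"
  shows "(\<exists>a b :: int. a > 0 \<and> b > 0 \<and>
            real p = (of_int a + of_int b * sqrt 2) * (of_int a - of_int b * sqrt 2))
       \<and> (\<forall>a b :: int. a > 0 \<longrightarrow> b > 0 \<longrightarrow>
            real p = (of_int a + of_int b * sqrt 2) * (of_int a - of_int b * sqrt 2) \<longrightarrow>
            (\<exists>c :: nat \<Rightarrow> int.
               sigma 1 c * sigma 7 c = complex_of_real (a + b * sqrt 2) \<and>
               sigma 3 c * sigma 5 c = complex_of_real (a - b * sqrt 2) \<and>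
               complex_of_real (emb_norm2 c) = 2 * (sigma 1 c * sigma 7 c) + 2 * (sigma 3 c * sigma 5 c) \<and>
               2 * (sigma 1 c * sigma 7 c) + 2 * (sigma 3 c * sigma 5 c) = 4 * of_int a))"
proof (intro conjI allI impI)
  obtain x where x: "0 < relnorm_a x" "0 < relnorm_b x" "z8_norm x = int p"
    using exists_relnorm_pos_norm_eq_prime[OF assms] .
  then have "real p = of_int (relnorm_a x ^ 2 - 2 * relnorm_b x ^ 2)"
    unfolding z8_norm_def by (metis of_int_of_nat_eq)
  with x(1,2) show "\<exists>a b :: int. a > 0 \<and> b > 0 \<and>
      real p = (of_int a + of_int b * sqrt 2) * (of_int a - of_int b * sqrt 2)"
    unfolding mult_conj_sqrt2 by (intro exI[of _ "relnorm_a x"] exI[of _ "relnorm_b x"]) simp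
next
  fix a b :: int
  assume "0 < a" "0 < b" and "real p = (of_int a + of_int b * sqrt 2) * (of_int a - of_int b * sqrt 2)"
  then have "a\<^sup>2 - 2 * b\<^sup>2 = int p"
    unfolding mult_conj_sqrt2 by (simp flip: of_int_eq_iff[where 'a = real])
  then obtain y where y: "relnorm_a y = a" "relnorm_b y = b"
    using exists_relnorm_eq[OF assms \<open>0 < a\<close>] by blast
  define c where "c = z8_coeffs y"
  have s17: "sigma 1 c * sigma 7 c = complex_of_real (a + b * sqrt 2)"
    using sigma1_mult_sigma7_z8_coeffs[of y] by (simp add: c_def y)
  have s35: "sigma 3 c * sigma 5 c = complex_of_real (a - b * sqrt 2)"
    using sigma3_mult_sigma5_z8_coeffs[of y] by (simp add: c_def y)
  have "2 * (sigma 1 c * sigma 7 c) + 2 * (sigma 3 c * sigma 5 c) = 4 * of_int a"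
    unfolding s17 s35 by (simp add: algebra_simps)
  with s17 s35 emb_norm2_eq show "\<exists>c :: nat \<Rightarrow> int.
      sigma 1 c * sigma 7 c = complex_of_real (a + b * sqrt 2) \<and>
      sigma 3 c * sigma 5 c = complex_of_real (a - b * sqrt 2) \<and>
      complex_of_real (emb_norm2 c) = 2 * (sigma 1 c * sigma 7 c) + 2 * (sigma 3 c * sigma 5 c) \<and>
      2 * (sigma 1 c * sigma 7 c) + 2 * (sigma 3 c * sigma 5 c) = 4 * of_int a"
    by blast
qed

end
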